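(* Let $\|\cdot\|_\alpha$ be a norm from a dimension-invariant family of matrix norms, let $u>0$, and let $A$ be $n\times n$ with blocking $\mathcal{I}$ having $n_t$ blocks. Let $\widehat L$ be block lower triangular and $\widehat R$ block upper triangular (with respect to $\mathcal{I}$), and let $A^{(1)}=A,A^{(2)},\dots,A^{(n_t)}$ be matrices where $A^{(k)}$ has block rows and columns indexed $k,\dots,n_t$. Write $\mathcal{T}_k=k+1:n_t$. Assume that for all $1\le k\le n_t$, $$A^{(k)}_{kk}=\widehat L_{kk}\widehat R_{kk}+E^{(k)}_{11},\quad \|E^{(k)}_{11}\|_\alpha\le c^{(k)}_{11}u\|A^{(k)}_{kk}\|_\alpha,$$ and that for all $1\le k\le n_t-1$, $$A^{(k)}_{k\mathcal{T}_k}=\widehat L_{kk}\widehat R_{k\mathcal{T}_k}+E^{(k)}_{12},\quad \|E^{(k)}_{12}\|_\alpha\le c^{(k)}_{12}u\|\widehat L_{kk}\|_\alpha\|\widehat R_{k\mathcal{T}_k}\|_\alpha,$$ $$A^{(k)}_{\mathcal{T}_kk}=\widehat L_{\mathcal{T}_kk}\widehat R_{kk}+E^{(k)}_{21},\quad \|E^{(k)}_{21}\|_\alpha\le c^{(k)}_{21}u\|\widehat L_{\mathcal{T}_kk}\|_\alpha\|\widehat R_{kk}\|_\alpha,$$ $$A^{(k+1)}=A^{(k)}_{\mathcal{T}_k\mathcal{T}_k}-\widehat L_{\mathcal{T}_kk}\widehat R_{k\mathcal{T}_k}+E^{(k)}_{22},\quad \|E^{(k)}_{22}\|_\alpha\le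 c^{(k)}_{22A}u\|A^{(k)}_{\mathcal{T}_k\mathcal{T}_k}\|_\alpha+c^{(k)}_{22LU}u\|\widehat L_{\mathcal{T}_kk}\|_\alpha\|\widehat R_{k\mathcal{T}_k}\|_\alpha,$$ with nonnegative constants $c^{(k)}_{\ast}$. Let $\rho=\max_{1\le k\le n_t}\|A^{(k)}\|_\alpha/\|A\|_\alpha$. Then $$\|A-\widehat L\widehat R\|_\alpha\le C_Au\rho\|A\|_\alpha+C_{LU}u\|\widehat L\|_\alpha\|\widehat R\|_\alpha,$$ where $C_A=\sum_{k=1}^{n_t}c^{(k)}_{11}+\sum_{k=1}^{n_t-1}c^{(k)}_{22A}$ and $C_{LU}=\sum_{k=1}^{n_t-1}\big(c^{(k)}_{21}+c^{(k)}_{12}+c^{(k)}_{22LU}\big)$.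
   Context: A dimension-invariant family of matrix norms is a choice of norm for matrices of every size such that for every matrix $B$ and every partition of its rows and columns into contiguous blocks $B_{i,j}$, $\max_{i,j}\|B_{i,j}\|\le\|B\|\le\sum_{i,j}\|B_{i,j}\|$. Blocking: a strictly increasing list $\mathcal{I}=[1=\mathcal{I}_1<\dots<\mathcal{I}_{n_t+1}=n+1]$; block $(i,j)$ of a matrix is the submatrix with rows $\mathcal{I}_i:\mathcal{I}_{i+1}-1$ and columns $\mathcal{I}_j:\mathcal{I}_{j+1}-1$, and $B_{i:j,k:l}$ denotes a range of blocks. The hypotheses model a floating-point block LU factorization (unit roundoff $u$) in which the Schur complement updates are performed in order. *)

theory Defs
  imports "Jordan_Normal_Form.Matrix"
begin

definition submat_rng :: "'a mat \<Rightarrow> nat \<Rightarrow> nat \<Rightarrow> nat \<Rightarrow> nat \<Rightarrow> 'a mat" where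
  "submat_rng B r0 r1 c0 c1 = mat (r1 - r0) (c1 - c0) (\<lambda>(i,j). B $$ (r0 + i, c0 + j))"

text \<open>Block k (1-based, 1 <= k <= nt) consists of the indices I!(k-1) ..< I!k.\<close>
definition blocking :: "nat list \<Rightarrow> nat \<Rightarrow> bool" where
  "blocking I n \<longleftrightarrow> 2 \<le> length I \<and> I ! 0 = 0 \<and> I ! (length I - 1) = n \<and> sorted_wrt (<) I"

definition nblocks :: "nat list \<Rightarrow> nat" where
  "nblocks I = length I - 1"

text \<open>Block range (i:j, k:l) (1-based, inclusive) of a matrix whose first row/column
  corresponds to global index off (off = 0 for full matrices; off = I!(k-1) for A^(k)).\<close>
definition blk :: "nat list \<Rightarrow> nat \<Rightarrow> 'a mat \<Rightarrow> nat \<Rightarrow> nat \<Rightarrow> nat \<Rightarrow> nat \<Rightarrow> 'a mat" where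
  "blk I off B i j k l = submat_rng B (I ! (i - 1) - off) (I ! j - off) (I ! (k - 1) - off) (I ! l - off)"

definition matrix_norm_family :: "(real mat \<Rightarrow> real) \<Rightarrow> bool" where
  "matrix_norm_family N \<longleftrightarrow>
     (\<forall>m p. \<forall>B \<in> carrier_mat m p. 0 \<le> N B \<and> (N B = 0 \<longleftrightarrow> B = 0\<^sub>m m p)) \<and>
     (\<forall>m p c. \<forall>B \<in> carrier_mat m p. N (c \<cdot>\<^sub>m B) = \<bar>c\<bar> * N B) \<and>
     (\<forall>m p. \<forall>B \<in> carrier_mat m p. \<forall>C \<in> carrier_mat m p. N (B + C) \<le> N B + N C)"

definition dim_invariant_norm :: "(real mat \<Rightarrow> real) \<Rightarrow> bool" where
  "dim_invariant_norm N \<longleftrightarrow> matrix_norm_family N \<and>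
     (\<forall>m p B RI CI. B \<in> carrier_mat m p \<longrightarrow> blocking RI m \<longrightarrow> blocking CI p \<longrightarrow>
        (\<forall>i \<in> {1..nblocks RI}. \<forall>j \<in> {1..nblocks CI}.
            N (submat_rng B (RI ! (i - 1)) (RI ! i) (CI ! (j - 1)) (CI ! j)) \<le> N B) \<and>
        N B \<le> (\<Sum>i = 1..nblocks RI. \<Sum>j = 1..nblocks CI.
            N (submat_rng B (RI ! (i - 1)) (RI ! i) (CI ! (j - 1)) (CI ! j))))"

definition block_lower :: "nat list \<Rightarrow> 'a::zero mat \<Rightarrow> bool" where
  "block_lower I L \<longleftrightarrow> (\<forall>i j. 1 \<le> i \<and> i < j \<and> j \<le> nblocks I \<longrightarrow>
      blk I 0 L i i j j = 0\<^sub>m (I ! i - I ! (i - 1)) (I ! j - I ! (j - 1)))"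

definition block_upper :: "nat list \<Rightarrow> 'a::zero mat \<Rightarrow> bool" where
  "block_upper I R \<longleftrightarrow> (\<forall>i j. 1 \<le> j \<and> j < i \<and> i \<le> nblocks I \<longrightarrow>
      blk I 0 R i i j j = 0\<^sub>m (I ! i - I ! (i - 1)) (I ! j - I ! (j - 1)))"

end

theory Submission imports Defs begin

(* Write D_k = A^(k) - L_{k:nt,k:nt} R_{k:nt,k:nt} for the residual of the trailing factorization
   at step k, so that D_1 = A - L R.  Because L is block lower and R block upper triangular, the
   product L_{k:nt,k:nt} R_{k:nt,k:nt} has blocks L_kk R_kk, L_kk R_kT, L_Tk R_kk and
   L_Tk R_kT + L_TT R_TT.  Hence the first three blocks of D_k are the errors of the three
   factorization steps, and its trailing block is D_(k+1) - E22.  Bounding the norm of D_k by the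
   sum of its four block norms gives N(D_k) <= N(D_(k+1)) + (errors of step k); since submatrix
   norms are dominated by the norm of the whole matrix, the errors are bounded by the constants
   times rho N(A) and N(L) N(R), and telescoping over k gives the claim. *)

lemma dim_submat_rng [simp]:
  "dim_row (submat_rng B r0 r1 c0 c1) = r1 - r0" "dim_col (submat_rng B r0 r1 c0 c1) = c1 - c0"
  by (simp_all add: submat_rng_def)

lemma index_submat_rng [simp]:
  "i < r1 - r0 \<Longrightarrow> j < c1 - c0 \<Longrightarrow> submat_rng B r0 r1 c0 c1 $$ (i, j) = B $$ (r0 + i, c0 + j)"
  by (simp add: submat_rng_def)

lemma submat_rng_full: "B \<in> carrier_mat m p \<Longrightarrow> submat_rng B 0 m 0 p = B"
  by (rule eq_matI) auto

lemma submat_rng_submat_rng: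
  assumes "r1 \<le> a1 - a0" "c1 \<le> b1 - b0"
  shows "submat_rng (submat_rng B a0 a1 b0 b1) r0 r1 c0 c1
    = submat_rng B (a0 + r0) (a0 + r1) (b0 + c0) (b0 + c1)"
  using assms by (intro eq_matI) (auto simp: add.assoc)

lemma submat_rng_minus:
  assumes "B \<in> carrier_mat m p" "C \<in> carrier_mat m p" "r1 \<le> m" "c1 \<le> p"
  shows "submat_rng (B - C) r0 r1 c0 c1 = submat_rng B r0 r1 c0 c1 - submat_rng C r0 r1 c0 c1"
  using assms by (intro eq_matI) auto

lemma submat_rng_mult:
  fixes X Y :: "'a::comm_semiring_0 mat"
  assumes X: "X \<in> carrier_mat m p" and Y: "Y \<in> carrier_mat p q"
    and "r1 \<le> m" "c1 \<le> q" "b \<le> p"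
  shows "submat_rng (X * Y) r0 r1 c0 c1
    = submat_rng X r0 r1 0 b * submat_rng Y 0 b c0 c1 + submat_rng X r0 r1 b p * submat_rng Y b p c0 c1"
proof (rule eq_matI)
  fix i j assume "i < dim_row (submat_rng X r0 r1 0 b * submat_rng Y 0 b c0 c1
      + submat_rng X r0 r1 b p * submat_rng Y b p c0 c1)"
    and "j < dim_col (submat_rng X r0 r1 0 b * submat_rng Y 0 b c0 c1
      + submat_rng X r0 r1 b p * submat_rng Y b p c0 c1)"
  then have ij: "i < r1 - r0" "j < c1 - c0" by simp_all
  define f where "f l = X $$ (r0 + i, l) * Y $$ (l, c0 + j)" for l
  have "(\<Sum>l = 0..<p. f l) = (\<Sum>l = 0..<b. f l) + (\<Sum>l = b..<p. f l)"
    using \<open>b \<le> p\<close> by (simp add: sum.atLeastLessThan_concat)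
  also have "(\<Sum>l = b..<p. f l) = (\<Sum>l = 0..<p - b. f (b + l))"
    using \<open>b \<le> p\<close> sum.shift_bounds_nat_ivl[of f 0 b "p - b"] by (simp add: add.commute)
  finally show "submat_rng (X * Y) r0 r1 c0 c1 $$ (i, j)
    = (submat_rng X r0 r1 0 b * submat_rng Y 0 b c0 c1
      + submat_rng X r0 r1 b p * submat_rng Y b p c0 c1) $$ (i, j)"
    using X Y ij assms(3,4) by (simp add: scalar_prod_def f_def)
qed auto

lemma dim_invariant_norm_nonneg: "dim_invariant_norm N \<Longrightarrow> 0 \<le> N B"
  unfolding dim_invariant_norm_def matrix_norm_family_def by (metis carrier_matI)

lemma dim_invariant_norm_eq_0_iff:
  "dim_invariant_norm N \<Longrightarrow> B \<in> carrier_mat m p \<Longrightarrow> N B = 0 \<longleftrightarrow> B = 0\<^sub>m m p"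
  unfolding dim_invariant_norm_def matrix_norm_family_def by blast

lemma dim_invariant_norm_empty:
  assumes norm: "dim_invariant_norm N" and "dim_row B = 0 \<or> dim_col B = 0"
  shows "N B = 0"
proof -
  have "B = 0\<^sub>m (dim_row B) (dim_col B)" using assms(2) by (intro eq_matI) auto
  moreover have "B \<in> carrier_mat (dim_row B) (dim_col B)" by (rule carrier_matI) simp_all
  ultimately show ?thesis using dim_invariant_norm_eq_0_iff[OF norm] by blast
qed

lemma dim_invariant_norm_diff_le:
  assumes norm: "dim_invariant_norm N" and B: "B \<in> carrier_mat m p" and C: "C \<in> carrier_mat m p"
  shows "N (B - C) \<le> N B + N C"
proof -
  have hom: "N (c \<cdot>\<^sub>m X) = \<bar>c\<bar> * N X" if "X \<in> carrier_mat m p" for c X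
    using norm that unfolding dim_invariant_norm_def matrix_norm_family_def by blast
  have tri: "N (X + Y) \<le> N X + N Y" if "X \<in> carrier_mat m p" "Y \<in> carrier_mat m p" for X Y
    using norm that unfolding dim_invariant_norm_def matrix_norm_family_def by blast
  have "B - C = B + (-1) \<cdot>\<^sub>m C" using B C by (intro eq_matI) auto
  then show ?thesis using tri[OF B smult_carrier_mat[OF C]] hom[OF C] by (metis abs_neg_one mult_1)
qed

lemma dim_invariant_normD:
  assumes "dim_invariant_norm N" "B \<in> carrier_mat m p" "blocking RI m" "blocking CI p"
  shows "\<And>i j. i \<in> {1..nblocks RI} \<Longrightarrow> j \<in> {1..nblocks CI} \<Longrightarrow>
      N (submat_rng B (RI ! (i - 1)) (RI ! i) (CI ! (j - 1)) (CI ! j)) \<le> N B"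
    and "N B \<le> (\<Sum>i = 1..nblocks RI. \<Sum>j = 1..nblocks CI.
      N (submat_rng B (RI ! (i - 1)) (RI ! i) (CI ! (j - 1)) (CI ! j)))"
  using assms unfolding dim_invariant_norm_def by blast+

lemma blocking_with_block:
  assumes "r0 < r1" "r1 \<le> m"
  obtains RI i where "blocking RI m" "i \<in> {1..nblocks RI}" "RI ! (i - 1) = r0" "RI ! i = r1"
proof -
  consider "r0 = 0" "r1 = m" | "r0 = 0" "r1 < m" | "0 < r0" "r1 = m" | "0 < r0" "r1 < m"
    using assms(2) by linarith
  then show ?thesis
  proof cases
    case 1
    then show ?thesis using assms by (intro that[of "[0, m]" 1]) (auto simp: blocking_def nblocks_def)
  next
    case 2
    then show ?thesis using assms by (intro that[of "[0, r1, m]" 1]) (auto simp: blocking_def nblocks_def)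
  next
    case 3
    then show ?thesis using assms by (intro that[of "[0, r0, m]" 2]) (auto simp: blocking_def nblocks_def)
  next
    case 4
    then show ?thesis using assms by (intro that[of "[0, r0, r1, m]" 2]) (auto simp: blocking_def nblocks_def)
  qed
qed

lemma norm_submat_rng_le:
  assumes norm: "dim_invariant_norm N" and B: "B \<in> carrier_mat m p" and "r1 \<le> m" "c1 \<le> p"
  shows "N (submat_rng B r0 r1 c0 c1) \<le> N B"
proof (cases "r0 < r1 \<and> c0 < c1")
  case True
  obtain RI i where RI: "blocking RI m" "i \<in> {1..nblocks RI}" "RI ! (i - 1) = r0" "RI ! i = r1"
    using blocking_with_block True assms(3) by blast
  obtain CI j where CI: "blocking CI p" "j \<in> {1..nblocks CI}" "CI ! (j - 1) = c0" "CI ! j = c1"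
    using blocking_with_block True assms(4) by blast
  show ?thesis using dim_invariant_normD(1)[OF norm B RI(1) CI(1) RI(2) CI(2)] RI CI by simp
next
  case False
  then show ?thesis
    using dim_invariant_norm_empty[OF norm, of "submat_rng B r0 r1 c0 c1"]
      dim_invariant_norm_nonneg[OF norm, of B] by auto
qed

lemma norm_le_2x2_blocks:
  assumes norm: "dim_invariant_norm N" and B: "B \<in> carrier_mat m m" and "0 < b" "b < m"
  shows "N B \<le> N (submat_rng B 0 b 0 b) + N (submat_rng B 0 b b m)
    + N (submat_rng B b m 0 b) + N (submat_rng B b m b m)"
proof -
  have I: "blocking [0, b, m] m" using assms(3,4) by (auto simp: blocking_def)
  show ?thesis
    using dim_invariant_normD(2)[OF norm B I I] by (simp add: nblocks_def numeral_2_eq_2)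
qed

lemma blockingD:
  assumes "blocking I n"
  shows "I ! 0 = 0" "I ! nblocks I = n" "1 \<le> nblocks I"
  using assms by (auto simp: blocking_def nblocks_def)

lemma blocking_nth_less: "blocking I n \<Longrightarrow> a < c \<Longrightarrow> c \<le> nblocks I \<Longrightarrow> I ! a < I ! c"
  using sorted_wrt_nth_less[of "(<)" I a c] by (auto simp: blocking_def nblocks_def)

lemma blocking_nth_le: "blocking I n \<Longrightarrow> a \<le> c \<Longrightarrow> c \<le> nblocks I \<Longrightarrow> I ! a \<le> I ! c"
  using blocking_nth_less[of I n a c] by (cases "a = c") auto

lemma blocking_nth_le_n: "blocking I n \<Longrightarrow> k \<le> nblocks I \<Longrightarrow> I ! k \<le> n"
  using blocking_nth_le[of I n k "nblocks I"] blockingD(2) by simp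

lemma blocking_block_of:
  assumes I: "blocking I n" and x: "x < n"
  obtains b where "b \<in> {1..nblocks I}" "I ! (b - 1) \<le> x" "x < I ! b"
proof -
  define b where "b = (LEAST b. x < I ! b)"
  have "x < I ! nblocks I" using blockingD(2)[OF I] x by simp
  then have "x < I ! b" "b \<le> nblocks I"
    unfolding b_def by (auto intro: LeastI Least_le)
  moreover have "b \<noteq> 0" using \<open>x < I ! b\<close> blockingD(1)[OF I] by (cases b) auto
  moreover have "\<not> x < I ! (b - 1)"
    using not_less_Least[of "b - 1" "\<lambda>b. x < I ! b"] \<open>b \<noteq> 0\<close> unfolding b_def by simp
  ultimately show ?thesis by (intro that) auto
qed

lemma blocking_separated_blocks:
  assumes I: "blocking I n" and "k \<le> nblocks I" "i < I ! k" "I ! k \<le> j" "j < n"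
  obtains bi bj where "bi \<in> {1..nblocks I}" "bj \<in> {1..nblocks I}" "bi < bj"
    "I ! (bi - 1) \<le> i" "i < I ! bi" "I ! (bj - 1) \<le> j" "j < I ! bj"
proof -
  obtain bi where bi: "bi \<in> {1..nblocks I}" "I ! (bi - 1) \<le> i" "i < I ! bi"
    using blocking_block_of[OF I, of i] assms(3-5) by auto
  obtain bj where bj: "bj \<in> {1..nblocks I}" "I ! (bj - 1) \<le> j" "j < I ! bj"
    using blocking_block_of[OF I, of j] assms(5) by auto
  have "bi \<le> k"
  proof (rule ccontr)
    assume "\<not> bi \<le> k"
    then have "I ! k \<le> I ! (bi - 1)" using blocking_nth_le[OF I, of k "bi - 1"] bi by auto
    then show False using bi(2) assms(3) by simp
  qed
  moreover have "k < bj"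
  proof (rule ccontr)
    assume "\<not> k < bj"
    then have "I ! bj \<le> I ! k" using blocking_nth_le[OF I, of bj k] assms(2) by auto
    then show False using bj(3) assms(4) by simp
  qed
  ultimately show ?thesis using that bi bj by simp
qed

lemma block_lower_entry_eq_0:
  assumes I: "blocking I n" and L: "block_lower I L"
    and "k \<le> nblocks I" "i < I ! k" "I ! k \<le> j" "j < n"
  shows "L $$ (i, j) = 0"
proof -
  obtain bi bj where b: "bi \<in> {1..nblocks I}" "bj \<in> {1..nblocks I}" "bi < bj"
    "I ! (bi - 1) \<le> i" "i < I ! bi" "I ! (bj - 1) \<le> j" "j < I ! bj"
    using blocking_separated_blocks[OF I assms(3-6)] by blast
  then have "blk I 0 L bi bi bj bj = 0\<^sub>m (I ! bi - I ! (bi - 1)) (I ! bj - I ! (bj - 1))"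
    using L unfolding block_lower_def by auto
  moreover have "blk I 0 L bi bi bj bj $$ (i - I ! (bi - 1), j - I ! (bj - 1)) = L $$ (i, j)"
    using b unfolding blk_def by simp
  ultimately show ?thesis using b by simp
qed

lemma block_upper_entry_eq_0:
  assumes I: "blocking I n" and R: "block_upper I R"
    and "k \<le> nblocks I" "i < I ! k" "I ! k \<le> j" "j < n"
  shows "R $$ (j, i) = 0"
proof -
  obtain bi bj where b: "bi \<in> {1..nblocks I}" "bj \<in> {1..nblocks I}" "bi < bj"
    "I ! (bi - 1) \<le> i" "i < I ! bi" "I ! (bj - 1) \<le> j" "j < I ! bj"
    using blocking_separated_blocks[OF I assms(3-6)] by blast
  then have "blk I 0 R bj bj bi bi = 0\<^sub>m (I ! bj - I ! (bj - 1)) (I ! bi - I ! (bi - 1))"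
    using R unfolding block_upper_def by auto
  moreover have "blk I 0 R bj bj bi bi $$ (j - I ! (bj - 1), i - I ! (bi - 1)) = R $$ (j, i)"
    using b unfolding blk_def by simp
  ultimately show ?thesis using b by simp
qed

lemma norm_blk_le:
  assumes norm: "dim_invariant_norm N" and I: "blocking I n"
    and B: "B \<in> carrier_mat (n - off) (n - off)" and "j \<le> nblocks I" "l \<le> nblocks I"
  shows "N (blk I off B i j k l) \<le> N B"
  unfolding blk_def
  using norm_submat_rng_le[OF norm B] blocking_nth_le_n[OF I] assms(4,5) by (simp add: diff_le_mono)

lemma norm_blk_mult_le:
  assumes norm: "dim_invariant_norm N" and I: "blocking I n"
    and L: "L \<in> carrier_mat n n" and R: "R \<in> carrier_mat n n"
    and "j \<le> nblocks I" "l \<le> nblocks I" "j' \<le> nblocks I" "l' \<le> nblocks I"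
  shows "N (blk I 0 L i j k l) * N (blk I 0 R i' j' k' l') \<le> N L * N R"
  using norm_blk_le[OF norm I, of L 0] norm_blk_le[OF norm I, of R 0] assms(3-)
    dim_invariant_norm_nonneg[OF norm] by (intro mult_mono) auto

lemma norm_residual_le_2x2_blocks:
  fixes A A' L R :: "real mat"
  assumes norm: "dim_invariant_norm N"
    and A: "A \<in> carrier_mat m m" and L: "L \<in> carrier_mat m m" and R: "R \<in> carrier_mat m m"
    and A': "A' \<in> carrier_mat (m - b) (m - b)" and b: "0 < b" "b < m"
    and L12: "submat_rng L 0 b b m = 0\<^sub>m b (m - b)" and R21: "submat_rng R b m 0 b = 0\<^sub>m (m - b) b"
  shows "N (A - L * R) \<le>
      N (submat_rng A 0 b 0 b - submat_rng L 0 b 0 b * submat_rng R 0 b 0 b)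
    + N (submat_rng A 0 b b m - submat_rng L 0 b 0 b * submat_rng R 0 b b m)
    + N (submat_rng A b m 0 b - submat_rng L b m 0 b * submat_rng R 0 b 0 b)
    + N (A' - (submat_rng A b m b m - submat_rng L b m 0 b * submat_rng R 0 b b m))
    + N (A' - submat_rng L b m b m * submat_rng R b m b m)"
proof -
  have bm: "b \<le> m" using b by simp
  have blocks: "submat_rng (A - L * R) r0 r1 c0 c1 = submat_rng A r0 r1 c0 c1
      - (submat_rng L r0 r1 0 b * submat_rng R 0 b c0 c1 + submat_rng L r0 r1 b m * submat_rng R b m c0 c1)"
    if "r1 \<le> m" "c1 \<le> m" for r0 r1 c0 c1
    unfolding submat_rng_minus[OF A mult_carrier_mat[OF L R] that] submat_rng_mult[OF L R that bm] ..
  have P: "submat_rng L r0 r1 0 b * submat_rng R 0 b c0 c1 \<in> carrier_mat (r1 - r0) (c1 - c0)"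
    for r0 r1 c0 c1 by (rule carrier_matI) simp_all
  have B11: "submat_rng (A - L * R) 0 b 0 b
      = submat_rng A 0 b 0 b - submat_rng L 0 b 0 b * submat_rng R 0 b 0 b"
    unfolding blocks[OF bm bm] L12 using right_add_zero_mat[OF P[of 0 b 0 b]] by simp
  have B12: "submat_rng (A - L * R) 0 b b m
      = submat_rng A 0 b b m - submat_rng L 0 b 0 b * submat_rng R 0 b b m"
    unfolding blocks[OF bm order.refl] L12 using right_add_zero_mat[OF P[of 0 b b m]] by simp
  have B21: "submat_rng (A - L * R) b m 0 b
      = submat_rng A b m 0 b - submat_rng L b m 0 b * submat_rng R 0 b 0 b"
    unfolding blocks[OF order.refl bm] R21 using right_add_zero_mat[OF P[of b m 0 b]] by simp
  have B22: "submat_rng (A - L * R) b m b m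
      = (A' - submat_rng L b m b m * submat_rng R b m b m)
      - (A' - (submat_rng A b m b m - submat_rng L b m 0 b * submat_rng R 0 b b m))"
    unfolding blocks[OF order.refl order.refl] using A' by (intro eq_matI) (auto simp: algebra_simps)
  have "N (submat_rng (A - L * R) b m b m)
      \<le> N (A' - submat_rng L b m b m * submat_rng R b m b m)
      + N (A' - (submat_rng A b m b m - submat_rng L b m 0 b * submat_rng R 0 b b m))"
    unfolding B22 using A' by (intro dim_invariant_norm_diff_le[OF norm]) (auto intro!: carrier_matI)
  moreover have "A - L * R \<in> carrier_mat m m" by (rule minus_carrier_mat, rule mult_carrier_mat[OF L R])
  ultimately show ?thesis using norm_le_2x2_blocks[OF norm _ b, of "A - L * R"] unfolding B11 B12 B21 by linarith
qed

lemma norm_trailing_residual_le: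
  fixes Ak Ak' L R :: "real mat" and I :: "nat list" and k :: nat
  defines "nt \<equiv> nblocks I" and "s \<equiv> I ! (k - 1)"
  assumes norm: "dim_invariant_norm N" and I: "blocking I n"
    and L: "L \<in> carrier_mat n n" and R: "R \<in> carrier_mat n n"
    and Llow: "block_lower I L" and Rupp: "block_upper I R"
    and k: "1 \<le> k" "k < nt"
    and Ak: "Ak \<in> carrier_mat (n - s) (n - s)" and Ak': "Ak' \<in> carrier_mat (n - I ! k) (n - I ! k)"
  shows "N (Ak - blk I 0 L k nt k nt * blk I 0 R k nt k nt)
    \<le> N (blk I s Ak k k k k - blk I 0 L k k k k * blk I 0 R k k k k)
    + N (blk I s Ak k k (k + 1) nt - blk I 0 L k k k k * blk I 0 R k k (k + 1) nt)
    + N (blk I s Ak (k + 1) nt k k - blk I 0 L (k + 1) nt k k * blk I 0 R k k k k)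
    + N (Ak' - (blk I s Ak (k + 1) nt (k + 1) nt - blk I 0 L (k + 1) nt k k * blk I 0 R k k (k + 1) nt))
    + N (Ak' - blk I 0 L (k + 1) nt (k + 1) nt * blk I 0 R (k + 1) nt (k + 1) nt)"
proof -
  define e m b where "e = I ! k" and "m = n - s" and "b = e - s"
  have se: "s < e" using blocking_nth_less[OF I, of "k - 1" k] k unfolding s_def e_def nt_def by simp
  have en: "e < n" using blocking_nth_less[OF I, of k nt] blockingD(2)[OF I] k unfolding e_def nt_def by simp
  have nt: "I ! nt = n" using blockingD(2)[OF I] unfolding nt_def .
  define L' R' where "L' = submat_rng L s n s n" and "R' = submat_rng R s n s n"
  have L_zero: "L $$ (i, j) = 0" if "i < e" "e \<le> j" "j < n" for i j
    using block_lower_entry_eq_0[OF I Llow, of k i j] that k unfolding e_def nt_def by simp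
  have R_zero: "R $$ (j, i) = 0" if "i < e" "e \<le> j" "j < n" for i j
    using block_upper_entry_eq_0[OF I Rupp, of k i j] that k unfolding e_def nt_def by simp
  have L'12: "submat_rng L' 0 b b m = 0\<^sub>m b (m - b)"
  proof (rule eq_matI)
    fix i j assume "i < dim_row (0\<^sub>m b (m - b))" "j < dim_col (0\<^sub>m b (m - b) :: real mat)"
    then show "submat_rng L' 0 b b m $$ (i, j) = 0\<^sub>m b (m - b) $$ (i, j)"
      using L_zero[of "s + i" "s + (b + j)"] se en unfolding L'_def m_def b_def by simp
  qed simp_all
  have R'21: "submat_rng R' b m 0 b = 0\<^sub>m (m - b) b"
  proof (rule eq_matI)
    fix i j assume "i < dim_row (0\<^sub>m (m - b) b)" "j < dim_col (0\<^sub>m (m - b) b :: real mat)"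
    then show "submat_rng R' b m 0 b $$ (i, j) = 0\<^sub>m (m - b) b $$ (i, j)"
      using R_zero[of "s + j" "s + (b + i)"] se en unfolding R'_def m_def b_def by simp
  qed simp_all
  have "m - b = n - e" "0 < b" "b < m" using se en unfolding m_def b_def by simp_all
  moreover have "L' \<in> carrier_mat m m" "R' \<in> carrier_mat m m"
    unfolding L'_def R'_def m_def by (auto intro!: carrier_matI)
  ultimately have "Ak \<in> carrier_mat m m" "L' \<in> carrier_mat m m" "R' \<in> carrier_mat m m"
    "Ak' \<in> carrier_mat (m - b) (m - b)" "0 < b" "b < m"
    using Ak Ak' unfolding m_def e_def by simp_all
  note split = norm_residual_le_2x2_blocks[OF norm this L'12 R'21]
  have "blk I s Ak k k k k = submat_rng Ak 0 b 0 b" "blk I s Ak k k (k + 1) nt = submat_rng Ak 0 b b m"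
    "blk I s Ak (k + 1) nt k k = submat_rng Ak b m 0 b"
    "blk I s Ak (k + 1) nt (k + 1) nt = submat_rng Ak b m b m"
    unfolding blk_def m_def b_def e_def nt by (simp_all add: s_def)
  moreover have "blk I 0 L k nt k nt = L'" "blk I 0 L k k k k = submat_rng L' 0 b 0 b"
    "blk I 0 L (k + 1) nt k k = submat_rng L' b m 0 b"
    "blk I 0 L (k + 1) nt (k + 1) nt = submat_rng L' b m b m"
    using se en unfolding blk_def L'_def m_def b_def e_def nt
    by (simp_all add: submat_rng_submat_rng s_def)
  moreover have "blk I 0 R k nt k nt = R'" "blk I 0 R k k k k = submat_rng R' 0 b 0 b"
    "blk I 0 R k k (k + 1) nt = submat_rng R' 0 b b m"
    "blk I 0 R (k + 1) nt (k + 1) nt = submat_rng R' b m b m"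
    using se en unfolding blk_def R'_def m_def b_def e_def nt
    by (simp_all add: submat_rng_submat_rng s_def)
  ultimately show ?thesis using split by simp
qed

lemma trailing_residual_step:
  fixes Ak Ak' L R :: "real mat" and I :: "nat list" and k :: nat
    and u M c11 c12 c21 c22A c22LU :: real
  defines "nt \<equiv> nblocks I" and "s \<equiv> I ! (k - 1)"
  assumes norm: "dim_invariant_norm N" and I: "blocking I n"
    and L: "L \<in> carrier_mat n n" and R: "R \<in> carrier_mat n n"
    and Llow: "block_lower I L" and Rupp: "block_upper I R"
    and k: "1 \<le> k" "k < nt"
    and Ak: "Ak \<in> carrier_mat (n - s) (n - s)" and Ak': "Ak' \<in> carrier_mat (n - I ! k) (n - I ! k)"
    and M: "N Ak \<le> M"
    and nonneg: "0 \<le> u" "0 \<le> c11" "0 \<le> c12" "0 \<le> c21" "0 \<le> c22A" "0 \<le> c22LU"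
    and E11: "N (blk I s Ak k k k k - blk I 0 L k k k k * blk I 0 R k k k k)
      \<le> c11 * u * N (blk I s Ak k k k k)"
    and E12: "N (blk I s Ak k k (k + 1) nt - blk I 0 L k k k k * blk I 0 R k k (k + 1) nt)
      \<le> c12 * u * N (blk I 0 L k k k k) * N (blk I 0 R k k (k + 1) nt)"
    and E21: "N (blk I s Ak (k + 1) nt k k - blk I 0 L (k + 1) nt k k * blk I 0 R k k k k)
      \<le> c21 * u * N (blk I 0 L (k + 1) nt k k) * N (blk I 0 R k k k k)"
    and E22: "N (Ak' - (blk I s Ak (k + 1) nt (k + 1) nt - blk I 0 L (k + 1) nt k k * blk I 0 R k k (k + 1) nt))
      \<le> c22A * u * N (blk I s Ak (k + 1) nt (k + 1) nt)
        + c22LU * u * N (blk I 0 L (k + 1) nt k k) * N (blk I 0 R k k (k + 1) nt)"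
  shows "N (Ak - blk I 0 L k nt k nt * blk I 0 R k nt k nt)
    \<le> N (Ak' - blk I 0 L (k + 1) nt (k + 1) nt * blk I 0 R (k + 1) nt (k + 1) nt)
      + (c11 + c22A) * u * M + (c21 + c12 + c22LU) * u * (N L * N R)"
proof -
  have knt: "k \<le> nt" "k + 1 \<le> nt" "nt \<le> nt" using k by simp_all
  have A_blk: "c * u * N (blk I s Ak i j k' l) \<le> c * u * M" if "0 \<le> c" "j \<le> nt" "l \<le> nt" for c i j k' l
  proof -
    have "N (blk I s Ak i j k' l) \<le> M"
      using norm_blk_le[OF norm I Ak] M that(2,3) unfolding nt_def by (meson order.trans)
    then show ?thesis by (rule mult_left_mono[OF _ mult_nonneg_nonneg[OF that(1) nonneg(1)]])
  qed
  have LR_blk: "c * u * N (blk I 0 L i j k' l) * N (blk I 0 R i' j' k'' l') \<le> c * u * (N L * N R)"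
    if "0 \<le> c" "j \<le> nt" "l \<le> nt" "j' \<le> nt" "l' \<le> nt" for c i j k' l i' j' k'' l'
  proof -
    have "N (blk I 0 L i j k' l) * N (blk I 0 R i' j' k'' l') \<le> N L * N R"
      using norm_blk_mult_le[OF norm I L R] that(2-) unfolding nt_def by blast
    then show ?thesis
      using mult_left_mono[OF _ mult_nonneg_nonneg[OF that(1) nonneg(1)]] by (simp add: mult.assoc)
  qed
  have "N (Ak - blk I 0 L k nt k nt * blk I 0 R k nt k nt)
    \<le> N (Ak' - blk I 0 L (k + 1) nt (k + 1) nt * blk I 0 R (k + 1) nt (k + 1) nt)
      + c11 * u * M + c22A * u * M + c21 * u * (N L * N R) + c12 * u * (N L * N R)
      + c22LU * u * (N L * N R)"
    using norm_trailing_residual_le[OF norm I L R Llow Rupp k[unfolded nt_def] Ak[unfolded s_def] Ak']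
      E11 E12 E21 E22 A_blk[OF nonneg(2) knt(1) knt(1), where i = k and k' = k]
      A_blk[OF nonneg(5) knt(3) knt(3), where i = "k + 1" and k' = "k + 1"]
      LR_blk[OF nonneg(3) knt(1) knt(1) knt(1) knt(3), where i = k and k' = k and i' = k and k'' = "k + 1"]
      LR_blk[OF nonneg(4) knt(3) knt(1) knt(1) knt(1), where i = "k + 1" and k' = k and i' = k and k'' = k]
      LR_blk[OF nonneg(6) knt(3) knt(1) knt(1) knt(3), where i = "k + 1" and k' = k and i' = k and k'' = "k + 1"]
    unfolding nt_def s_def by linarith
  then show ?thesis by (simp add: distrib_right)
qed

lemma telescoping_le:
  fixes d a :: "nat \<Rightarrow> real"
  assumes "j \<le> k" and step: "\<And>i. j \<le> i \<Longrightarrow> i < k \<Longrightarrow> d i \<le> d (Suc i) + a i"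
  shows "d j \<le> d k + (\<Sum>i = j..<k. a i)"
proof -
  have "d j - d k = (\<Sum>i = j..<k. d i - d (Suc i))"
    using sum_Suc_diff'[OF \<open>j \<le> k\<close>, of "\<lambda>i. - d i"] by simp
  also have "\<dots> \<le> (\<Sum>i = j..<k. a i)"
    using step by (intro sum_mono) (simp add: algebra_simps)
  finally show ?thesis by simp
qed

theorem theorem2p3:
  fixes N :: "real mat \<Rightarrow> real" and u :: real and n :: nat and I :: "nat list"
    and A L R :: "real mat" and Ak :: "nat \<Rightarrow> real mat"
    and c11 c12 c21 c22A c22LU :: "nat \<Rightarrow> real"
  assumes norm: "dim_invariant_norm N"
    and u: "u > 0"
    and A: "A \<in> carrier_mat n n" and A_nz: "A \<noteq> 0\<^sub>m n n"
    and I: "blocking I n"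
    and L: "L \<in> carrier_mat n n" and R: "R \<in> carrier_mat n n"
    and Llow: "block_lower I L" and Rupp: "block_upper I R"
    and A1: "Ak 1 = A"
    and Akdim: "\<forall>k \<in> {1..nblocks I}. Ak k \<in> carrier_mat (n - I ! (k - 1)) (n - I ! (k - 1))"
    and c11_nn: "\<forall>k \<in> {1..nblocks I}. 0 \<le> c11 k"
    and c_nn: "\<forall>k \<in> {1..<nblocks I}. 0 \<le> c12 k \<and> 0 \<le> c21 k \<and> 0 \<le> c22A k \<and> 0 \<le> c22LU k"
    and E11: "\<forall>k \<in> {1..nblocks I}.
       N (blk I (I ! (k - 1)) (Ak k) k k k k - blk I 0 L k k k k * blk I 0 R k k k k)
         \<le> c11 k * u * N (blk I (I ! (k - 1)) (Ak k) k k k k)"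
    and E12: "\<forall>k \<in> {1..<nblocks I}.
       N (blk I (I ! (k - 1)) (Ak k) k k (k + 1) (nblocks I) - blk I 0 L k k k k * blk I 0 R k k (k + 1) (nblocks I))
         \<le> c12 k * u * N (blk I 0 L k k k k) * N (blk I 0 R k k (k + 1) (nblocks I))"
    and E21: "\<forall>k \<in> {1..<nblocks I}.
       N (blk I (I ! (k - 1)) (Ak k) (k + 1) (nblocks I) k k - blk I 0 L (k + 1) (nblocks I) k k * blk I 0 R k k k k)
         \<le> c21 k * u * N (blk I 0 L (k + 1) (nblocks I) k k) * N (blk I 0 R k k k k)"
    and E22: "\<forall>k \<in> {1..<nblocks I}.
       N (Ak (k + 1) - (blk I (I ! (k - 1)) (Ak k) (k + 1) (nblocks I) (k + 1) (nblocks I)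
                         - blk I 0 L (k + 1) (nblocks I) k k * blk I 0 R k k (k + 1) (nblocks I)))
         \<le> c22A k * u * N (blk I (I ! (k - 1)) (Ak k) (k + 1) (nblocks I) (k + 1) (nblocks I))
           + c22LU k * u * N (blk I 0 L (k + 1) (nblocks I) k k) * N (blk I 0 R k k (k + 1) (nblocks I))"
  shows "N (A - L * R)
     \<le> ((\<Sum>k = 1..nblocks I. c11 k) + (\<Sum>k = 1..<nblocks I. c22A k)) * u
         * (MAX k \<in> {1..nblocks I}. N (Ak k) / N A) * N A
       + (\<Sum>k = 1..<nblocks I. c21 k + c12 k + c22LU k) * u * N L * N R"
proof -
  let ?nt = "nblocks I"
  define \<rho> where "\<rho> = (MAX k \<in> {1..?nt}. N (Ak k) / N A)"
  define d where "d k = N (Ak k - blk I 0 L k ?nt k ?nt * blk I 0 R k ?nt k ?nt)" for k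
  define a where "a k = (c11 k + c22A k) * u * (\<rho> * N A) + (c21 k + c12 k + c22LU k) * u * (N L * N R)"
    for k
  have nt: "1 \<le> ?nt" "I ! ?nt = n" "I ! 0 = 0" using blockingD[OF I] by simp_all
  have "0 < N A"
    using dim_invariant_norm_nonneg[OF norm, of A] dim_invariant_norm_eq_0_iff[OF norm A] A_nz by simp
  then have Ak_le: "N (Ak k) \<le> \<rho> * N A" if "k \<in> {1..?nt}" for k
    using that unfolding \<rho>_def by (simp add: pos_divide_le_eq[symmetric])
  have d_last: "d ?nt \<le> c11 ?nt * u * (\<rho> * N A)"
  proof -
    have Ant: "Ak ?nt \<in> carrier_mat (n - I ! (?nt - 1)) (n - I ! (?nt - 1))" using Akdim nt by simp
    have "blk I (I ! (?nt - 1)) (Ak ?nt) ?nt ?nt ?nt ?nt = Ak ?nt"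
      using submat_rng_full[OF Ant] nt unfolding blk_def by simp
    then have "d ?nt \<le> c11 ?nt * u * N (Ak ?nt)" using E11 nt unfolding d_def by force
    also have "\<dots> \<le> c11 ?nt * u * (\<rho> * N A)" using Ak_le c11_nn nt u by (intro mult_left_mono) auto
    finally show ?thesis .
  qed
  have d_step: "d k \<le> d (Suc k) + a k" if "1 \<le> k" "k < ?nt" for k
  proof -
    have k: "k \<in> {1..?nt}" "k \<in> {1..<?nt}" using that by auto
    have Ak: "Ak k \<in> carrier_mat (n - I ! (k - 1)) (n - I ! (k - 1))" using Akdim k by blast
    have Ak': "Ak (k + 1) \<in> carrier_mat (n - I ! k) (n - I ! k)" using Akdim that by force
    have c: "0 \<le> c11 k" "0 \<le> c12 k" "0 \<le> c21 k" "0 \<le> c22A k" "0 \<le> c22LU k"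
      using c11_nn c_nn k by auto
    show ?thesis
      using trailing_residual_step[OF norm I L R Llow Rupp that Ak Ak' Ak_le[OF k(1)] less_imp_le[OF u] c
          E11[rule_format, OF k(1)] E12[rule_format, OF k(2)] E21[rule_format, OF k(2)] E22[rule_format, OF k(2)]]
      unfolding d_def a_def by simp
  qed
  have "d 1 \<le> d ?nt + (\<Sum>k = 1..<?nt. a k)" using telescoping_le[OF nt(1)] d_step by blast
  moreover have "d 1 = N (A - L * R)"
    using A1 nt submat_rng_full[OF L] submat_rng_full[OF R] unfolding d_def blk_def by simp
  ultimately have "N (A - L * R) \<le> c11 ?nt * u * (\<rho> * N A) + (\<Sum>k = 1..<?nt. a k)"
    using d_last by linarith
  moreover have "(\<Sum>k = 1..?nt. c11 k) = (\<Sum>k = 1..<?nt. c11 k) + c11 ?nt"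
    using nt(1) by (simp add: sum.last_plus)
  ultimately show ?thesis unfolding a_def \<rho>_def[symmetric]
    by (simp add: sum.distrib sum_distrib_left sum_distrib_right algebra_simps)
qed

end
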